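(* For $n\ge1$ and $k\ge1$, \[\#\{\pi\in\mathcal S_n:\ \mathrm{leaf}(T_\pi)=k\}=\#\{\pi\in\mathcal A^B_n:\ \mathrm{des}_B(\pi)=k-1\}.\]
   Context: $\mathfrak B_n$ is the set of signed permutations $\pi=\pi_1\cdots\pi_n$ (words over $\{\pm1,\dots,\pm n\}$ with $|\pi_1|,\dots,|\pi_n|$ a permutation of $[n]$), compared as integers; set $\pi_0=0$. $\mathrm{des}_B(\pi)=\#\{i\in\{0,\dots,n-1\}:\pi_i>\pi_{i+1}\}$. The set of snakes is $\mathcal S_n=\{\pi\in\mathfrak B_n: 0<\pi_1>\pi_2<\pi_3>\pi_4<\cdots\}$ (i.e. $\pi_1>0$ and $\pi_i>\pi_{i+1}$ for odd $i$, $\pi_i<\pi_{i+1}$ for even $i$, $1\le i\le n-1$). Trees are rooted binary trees with each child designated left or right. A min–max tree is labeled bijectively by a totally ordered set so that each node's label is the minimum or maximum of its subtree's labels. A node with a child is inner; an inner node is a min-node (resp. max-node) if its label is the minimum (resp. maximum) of its subtree. An HR-tree is a min–max tree in which every inner node $s$ has a nonempty right subtree containing the maximum label of the subtree of $s$ if $s$ is a min-node, the minimum if $s$ is a max-node. The reading word is the in-order reading $w(T)=w(L)\,\ell_{\mathrm{root}}\,w(R)$. $T_\pi$ is the unique HR-tree with label set $\{0,\pi_1,\dots,\pi_n\}$ whose reading word is $0\pi_1\cdots\pi_n$; $\mathrm{leaf}(T)$ is its number of leaves (node $0$ included if a leaf). For an index $i\in[n]$, the $\pi_i$-factorization of the word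 $0\pi_1\cdots\pi_n$ is $w_1w_2\pi_iw_4w_5$ where $w_2$ (resp. $w_4$) is the longest factor ending just before (resp. starting just after) $\pi_i$ all of whose letters exceed $\pi_i$. $\mathcal A^B_n$ is the set of type B André permutations: $\pi\in\mathfrak B_n$ such that (i) no $i\in\{1,\dots,n-1\}$ has $\pi_{i-1}>\pi_i>\pi_{i+1}$, (ii) $\pi_{n-1}<\pi_n$, (iii) for every $i\in\{1,\dots,n-1\}$ with $\pi_{i-1}>\pi_i<\pi_{i+1}$, $\max(w_2)<\max(w_4)$ in the $\pi_i$-factorization. *)

theory Defs
  imports Main "HOL-Library.Tree"
begin

definition signed_perms :: "nat \<Rightarrow> int list set" where
  "signed_perms n = {w. length w = n \<and> distinct (map abs w) \<and> set (map abs w) = {1..int n}}"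

definition desB :: "int list \<Rightarrow> nat" where
  "desB w = card {i. i < length w \<and> (0 # w) ! i > (0 # w) ! (Suc i)}"

definition snakes :: "nat \<Rightarrow> int list set" where
  "snakes n = {w \<in> signed_perms n. \<forall>i < n.
      (if even i then (0 # w) ! i < (0 # w) ! Suc i else (0 # w) ! i > (0 # w) ! Suc i)}"

(* trees: 'a tree from HOL-Library.Tree, Leaf = empty tree *)
definition inner_node :: "'a tree \<Rightarrow> bool" where
  "inner_node t \<longleftrightarrow> (\<exists>l a r. t = Node l a r \<and> (l \<noteq> Leaf \<or> r \<noteq> Leaf))"

definition minmax_tree :: "int tree \<Rightarrow> bool" where
  "minmax_tree t \<longleftrightarrow> distinct (inorder t) \<and>
     (\<forall>l a r. Node l a r \<in> subtrees t \<longrightarrow>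
        a = Min (set_tree (Node l a r)) \<or> a = Max (set_tree (Node l a r)))"

definition hr_tree :: "int tree \<Rightarrow> bool" where
  "hr_tree t \<longleftrightarrow> minmax_tree t \<and>
     (\<forall>l a r. Node l a r \<in> subtrees t \<longrightarrow> inner_node (Node l a r) \<longrightarrow>
        r \<noteq> Leaf \<and>
        (a = Min (set_tree (Node l a r)) \<longrightarrow> Max (set_tree (Node l a r)) \<in> set_tree r) \<and>
        (a = Max (set_tree (Node l a r)) \<longrightarrow> Min (set_tree (Node l a r)) \<in> set_tree r))"

fun leaf_count :: "'a tree \<Rightarrow> nat" where
  "leaf_count Leaf = 0"
| "leaf_count (Node l a r) = (if l = Leaf \<and> r = Leaf then 1 else leaf_count l + leaf_count r)"

definition T_pi :: "int list \<Rightarrow> int tree" where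
  "T_pi w = (THE t. hr_tree t \<and> inorder t = 0 # w)"

(* pi_i-factorization of the word p = 0 pi_1 ... pi_n at position i: the factors w2 and w4 *)
definition fact_w2 :: "int list \<Rightarrow> nat \<Rightarrow> int list" where
  "fact_w2 p i = rev (takeWhile (\<lambda>x. x > p ! i) (rev (take i p)))"

definition fact_w4 :: "int list \<Rightarrow> nat \<Rightarrow> int list" where
  "fact_w4 p i = takeWhile (\<lambda>x. x > p ! i) (drop (Suc i) p)"

definition andreB :: "nat \<Rightarrow> int list set" where
  "andreB n = {w \<in> signed_perms n. let p = 0 # w in
      (\<forall>i \<in> {1..n-1}. \<not> (p ! (i-1) > p ! i \<and> p ! i > p ! Suc i)) \<and>
      p ! (n-1) < p ! n \<and>
      (\<forall>i \<in> {1..n-1}. p ! (i-1) > p ! i \<and> p ! i < p ! Suc i \<longrightarrow>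
          Max (set (fact_w2 p i)) < Max (set (fact_w4 p i)))}"

end

theory Submission
  imports Defs "HOL-Combinatorics.Multiset_Permutations"
begin

(* All words are read as arrangements u = 0 w_1 ... w_n of their underlying set S, so it suffices
   to show, for every finite S and first letter a, that the up-down arrangements of S starting
   with a whose HR-tree has k leaves are as many as the Andre arrangements starting with a with
   k - 1 descents.  This goes by strong induction on |S|, both counts obeying the same recurrence.
   If a = min S, removing a leaves a down-up, respectively an Andre, arrangement of S - {min S}.
   Otherwise an up-down word splits at its first extremal letter x, which becomes the root of
   its HR-tree: u = L x R with L an up-down word on A, a subset of S - {min S, max S} containing a,
   and R alternating on S - A - {x}, and the leaves of L and R add up.  An Andre word splits at
   min S into Andre words L and R with max L < max R, so that max S lies in R, and descents
   plus one add up.  The remaining factors agree because the number of up-down or down-up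
   arrangements with k leaves depends only on the size of the set, as HR-trees commute with
   order-preserving and order-reversing relabellings. *)

section \<open>The HR-tree of a word\<close>

definition first_extremum :: "'a::linorder list \<Rightarrow> nat" where
  "first_extremum u = (LEAST i. i < length u \<and> (u ! i = Min (set u) \<or> u ! i = Max (set u)))"

lemma first_extremum:
  assumes "u \<noteq> []"
  shows first_extremum_less_length: "first_extremum u < length u"
    and nth_first_extremum: "u ! first_extremum u = Min (set u) \<or> u ! first_extremum u = Max (set u)"
    and nth_before_first_extremum:
      "\<And>i. i < first_extremum u \<Longrightarrow> u ! i \<noteq> Min (set u) \<and> u ! i \<noteq> Max (set u)"
proof -
  let ?P = "\<lambda>i. i < length u \<and> (u ! i = Min (set u) \<or> u ! i = Max (set u))"
  obtain i where i: "?P i"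
    using assms by (metis Min_in List.finite_set in_set_conv_nth set_empty)
  show "first_extremum u < length u"
    and "u ! first_extremum u = Min (set u) \<or> u ! first_extremum u = Max (set u)"
    using LeastI[of ?P i, OF i] unfolding first_extremum_def by auto
  fix j assume "j < first_extremum u"
  then show "u ! j \<noteq> Min (set u) \<and> u ! j \<noteq> Max (set u)"
    using not_less_Least[of j ?P] LeastI[of ?P i, OF i] unfolding first_extremum_def by auto
qed

lemma first_extremum_append:
  assumes "x = Min (set (L @ x # R)) \<or> x = Max (set (L @ x # R))"
    and "\<And>y. y \<in> set L \<Longrightarrow> y \<noteq> Min (set (L @ x # R)) \<and> y \<noteq> Max (set (L @ x # R))"
  shows "first_extremum (L @ x # R) = length L"
  unfolding first_extremum_def
proof (rule Least_equality)
  fix i assume "i < length (L @ x # R) \<and> ((L @ x # R) ! i = Min (set (L @ x # R)) \<or>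
      (L @ x # R) ! i = Max (set (L @ x # R)))"
  then show "length L \<le> i"
    using assms(2) by (metis not_le nth_append nth_mem)
qed (use assms(1) in simp)

(* The root of an HR-tree is extremal in its subtree and the other extremum lies in its right
   subtree, so the root must be the first extremal letter of the reading word. *)
function hr_tree_of :: "'a::linorder list \<Rightarrow> 'a tree" where
  "hr_tree_of u = (if u = [] then Leaf else
     Node (hr_tree_of (take (first_extremum u) u)) (u ! first_extremum u)
          (hr_tree_of (drop (Suc (first_extremum u)) u)))"
  by auto
termination
  by (relation "measure length") (auto dest: first_extremum_less_length)

declare hr_tree_of.simps [simp del]

lemma hr_tree_of_Nil [simp]: "hr_tree_of [] = Leaf"
  by (simp add: hr_tree_of.simps)

lemma hr_tree_of_eq_Leaf_iff [simp]: "hr_tree_of u = Leaf \<longleftrightarrow> u = []"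
  by (subst hr_tree_of.simps) auto

lemma hr_tree_of_append:
  assumes "x = Min (set (L @ x # R)) \<or> x = Max (set (L @ x # R))"
    and "\<And>y. y \<in> set L \<Longrightarrow> y \<noteq> Min (set (L @ x # R)) \<and> y \<noteq> Max (set (L @ x # R))"
  shows "hr_tree_of (L @ x # R) = Node (hr_tree_of L) x (hr_tree_of R)"
  using first_extremum_append[OF assms] by (subst hr_tree_of.simps) simp

lemma inorder_hr_tree_of [simp]: "inorder (hr_tree_of u) = u"
proof (induction u rule: hr_tree_of.induct)
  case (1 u)
  then show ?case
    by (subst hr_tree_of.simps) (simp add: id_take_nth_drop[symmetric] first_extremum_less_length)
qed

lemma set_hr_tree_of [simp]: "set_tree (hr_tree_of u) = set u"
  by (metis inorder_hr_tree_of set_inorder)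

lemma hr_tree_of_single [simp]: "hr_tree_of [a] = Node Leaf a Leaf"
  using hr_tree_of_append[of a "[]" "[]"] by simp

definition hr_node :: "'a::linorder tree \<Rightarrow> 'a \<Rightarrow> 'a tree \<Rightarrow> bool" where
  "hr_node l a r \<longleftrightarrow> (a = Min (set_tree (Node l a r)) \<or> a = Max (set_tree (Node l a r))) \<and>
     (inner_node (Node l a r) \<longrightarrow> r \<noteq> Leaf \<and>
        (a = Min (set_tree (Node l a r)) \<longrightarrow> Max (set_tree (Node l a r)) \<in> set_tree r) \<and>
        (a = Max (set_tree (Node l a r)) \<longrightarrow> Min (set_tree (Node l a r)) \<in> set_tree r))"

lemma hr_tree_iff_hr_nodes:
  "hr_tree t \<longleftrightarrow> distinct (inorder t) \<and> (\<forall>l a r. Node l a r \<in> subtrees t \<longrightarrow> hr_node l a r)"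
  unfolding hr_tree_def minmax_tree_def hr_node_def by blast

lemma hr_tree_Leaf [simp]: "hr_tree Leaf"
  unfolding hr_tree_iff_hr_nodes by simp

lemma hr_tree_Node:
  "hr_tree (Node l a r) \<longleftrightarrow>
     distinct (inorder l @ a # inorder r) \<and> hr_node l a r \<and> hr_tree l \<and> hr_tree r"
proof -
  have "(\<forall>l' a' r'. Node l' a' r' \<in> subtrees (Node l a r) \<longrightarrow> hr_node l' a' r') \<longleftrightarrow>
      hr_node l a r \<and> (\<forall>l' a' r'. Node l' a' r' \<in> subtrees l \<longrightarrow> hr_node l' a' r') \<and>
      (\<forall>l' a' r'. Node l' a' r' \<in> subtrees r \<longrightarrow> hr_node l' a' r')"
    by auto
  then show ?thesis
    unfolding hr_tree_iff_hr_nodes by auto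
qed

lemma other_extremum_in_right:
  fixes x :: "'a::linorder" and L R :: "'a list"
  defines "S \<equiv> set (L @ x # R)"
  assumes "distinct (L @ x # R)" and "L \<noteq> [] \<or> R \<noteq> []"
    and "\<And>y. y \<in> set L \<Longrightarrow> y \<noteq> Min S \<and> y \<noteq> Max S"
  shows "x = Min S \<Longrightarrow> Max S \<in> set R" and "x = Max S \<Longrightarrow> Min S \<in> set R"
proof -
  have S: "finite S" "\<And>z. z \<in> S \<longleftrightarrow> z = x \<or> z \<in> set L \<or> z \<in> set R"
    unfolding S_def by auto
  have "set L \<union> set R \<noteq> {}"
    using assms(3) by simp
  then obtain y where "y \<in> set L \<union> set R"
    by (metis ex_in_conv)
  then have y: "y \<in> S" "y \<noteq> x"
    using assms(2) unfolding S_def by auto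
  have "x \<in> S"
    using S(2) by blast
  then have "Min S \<le> y" "y \<le> Max S" "Min S \<le> x" "x \<le> Max S"
    using y(1) S(1) by auto
  then have "Min S \<noteq> Max S"
    using y(2) by (metis antisym order.trans)
  moreover have "Min S \<in> S" "Max S \<in> S"
    using S(1) y(1) by (auto intro: Min_in Max_in)
  ultimately show "x = Min S \<Longrightarrow> Max S \<in> set R" "x = Max S \<Longrightarrow> Min S \<in> set R"
    using assms(4)[of "Max S"] assms(4)[of "Min S"] S(2)[of "Max S"] S(2)[of "Min S"] by auto
qed

lemma hr_tree_hr_tree_of: "distinct u \<Longrightarrow> hr_tree (hr_tree_of u)"
proof (induction u rule: hr_tree_of.induct)
  case (1 u)
  show ?case
  proof (cases "u = []")
    case False
    define j where "j = first_extremum u"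
    define L R where "L = take j u" and "R = drop (Suc j) u"
    define x where "x = u ! j"
    have u: "u = L @ x # R"
      using first_extremum_less_length[OF False] unfolding L_def R_def x_def j_def
      by (simp add: id_take_nth_drop[symmetric])
    have x: "x = Min (set u) \<or> x = Max (set u)"
      using nth_first_extremum[OF False] unfolding x_def j_def .
    have L: "y \<noteq> Min (set u) \<and> y \<noteq> Max (set u)" if "y \<in> set L" for y
      using that nth_before_first_extremum[OF False] unfolding L_def j_def
      by (auto simp: in_set_conv_nth)
    have "inner_node (Node (hr_tree_of L) x (hr_tree_of R)) \<Longrightarrow> L \<noteq> [] \<or> R \<noteq> []"
      unfolding inner_node_def by auto
    moreover have "set_tree (Node (hr_tree_of L) x (hr_tree_of R)) = set u"
      unfolding u by simp
    moreover have "x = Min (set u) \<Longrightarrow> Max (set u) \<in> set R"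
      and "x = Max (set u) \<Longrightarrow> Min (set u) \<in> set R" if "L \<noteq> [] \<or> R \<noteq> []"
      using other_extremum_in_right[of L x R, folded u] "1.prems" L that by blast+
    ultimately have "hr_node (hr_tree_of L) x (hr_tree_of R)"
      using x unfolding hr_node_def by auto
    moreover have "hr_tree (hr_tree_of L)" "hr_tree (hr_tree_of R)"
      using "1.IH" False "1.prems" unfolding L_def R_def j_def by simp_all
    moreover have "distinct (inorder (hr_tree_of L) @ x # inorder (hr_tree_of R))"
      using "1.prems" unfolding u by simp
    moreover have "hr_tree_of u = Node (hr_tree_of L) x (hr_tree_of R)"
      using hr_tree_of_append[of x L R] x L unfolding u by blast
    ultimately show ?thesis
      by (simp only: hr_tree_Node)
  qed simp
qed

lemma hr_tree_of_inorder: "hr_tree t \<Longrightarrow> hr_tree_of (inorder t) = t"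
proof (induction t)
  case (Node l a r)
  let ?S = "set (inorder l @ a # inorder r)"
  have H: "distinct (inorder l @ a # inorder r)" "hr_node l a r" "hr_tree l" "hr_tree r"
    using Node.prems by (simp_all add: hr_tree_Node)
  have extremum: "a = Min ?S \<or> a = Max ?S"
    using H(2) unfolding hr_node_def by simp
  have "y \<noteq> Min ?S \<and> y \<noteq> Max ?S" if "y \<in> set (inorder l)" for y
  proof -
    have "inner_node (Node l a r)" "y \<noteq> a" "y \<notin> set_tree r"
      using that H(1) unfolding inner_node_def by auto
    then show ?thesis
      using H(2) unfolding hr_node_def by auto
  qed
  from hr_tree_of_append[OF extremum this]
  show ?case
    using Node.IH H(3,4) by simp
qed simp

lemma T_pi_eq_hr_tree_of: "distinct (0 # w) \<Longrightarrow> T_pi w = hr_tree_of (0 # w)"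
  unfolding T_pi_def
proof (rule the_equality)
  show "\<And>t. hr_tree t \<and> inorder t = 0 # w \<Longrightarrow> t = hr_tree_of (0 # w)"
    using hr_tree_of_inorder by metis
qed (simp add: hr_tree_hr_tree_of)

section \<open>Strictly monotone and antitone relabelling\<close>

lemma extremal_image_iff:
  fixes h :: "'a::linorder \<Rightarrow> 'b::linorder"
  assumes h: "strict_mono_on S h \<or> strict_antimono_on S h" and S: "finite S" "x \<in> S"
  shows "(h x = Min (h ` S) \<or> h x = Max (h ` S)) \<longleftrightarrow> (x = Min S \<or> x = Max S)"
proof -
  have MinS: "Min S \<in> S" and MaxS: "Max S \<in> S"
    using S by (auto intro: Min_in Max_in)
  have inj: "inj_on h S"
    using h by (auto simp: strict_antimono_iff_antimono strict_mono_on_imp_inj_on)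
  then have eq_iff: "h x = h y \<longleftrightarrow> x = y" if "y \<in> S" for y
    using S(2) that by (auto dest: inj_onD)
  from h consider "strict_mono_on S h" | "strict_antimono_on S h"
    by blast
  then have "{Min (h ` S), Max (h ` S)} = {h (Min S), h (Max S)}"
  proof cases
    case 1
    then have "h (Min S) \<le> h y" "h y \<le> h (Max S)" if "y \<in> S" for y
      using that S(1) MinS MaxS by (simp_all add: strict_mono_on_less_eq)
    then have "Min (h ` S) = h (Min S)" "Max (h ` S) = h (Max S)"
      by (intro Min_eqI Max_eqI; use S(1) MinS MaxS in auto)+
    then show ?thesis
      by simp
  next
    case 2
    have le: "h y \<le> h z" if "y \<in> S" "z \<in> S" "z \<le> y" for y z
      using 2 that by (cases "z = y") (auto simp: monotone_on_def order_le_less)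
    then have "h (Max S) \<le> h y" "h y \<le> h (Min S)" if "y \<in> S" for y
      using that S(1) MinS MaxS by simp_all
    then have "Min (h ` S) = h (Max S)" "Max (h ` S) = h (Min S)"
      by (intro Min_eqI Max_eqI; use S(1) MinS MaxS in auto)+
    then show ?thesis
      by auto
  qed
  then show ?thesis
    using eq_iff MinS MaxS by blast
qed

lemma first_extremum_map:
  assumes "strict_mono_on (set u) h \<or> strict_antimono_on (set u) h"
  shows "first_extremum (map h u) = first_extremum u"
proof -
  have "(map h u ! i = Min (set (map h u)) \<or> map h u ! i = Max (set (map h u))) \<longleftrightarrow>
      (u ! i = Min (set u) \<or> u ! i = Max (set u))" if "i < length u" for i
    using extremal_image_iff[OF assms] that by simp
  then have "(\<lambda>i. i < length (map h u) \<and>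
      (map h u ! i = Min (set (map h u)) \<or> map h u ! i = Max (set (map h u)))) =
    (\<lambda>i. i < length u \<and> (u ! i = Min (set u) \<or> u ! i = Max (set u)))"
    by (intro ext) (metis length_map)
  then show ?thesis
    unfolding first_extremum_def by simp
qed

lemma hr_tree_of_map:
  assumes "strict_mono_on (set u) h \<or> strict_antimono_on (set u) h"
  shows "hr_tree_of (map h u) = map_tree h (hr_tree_of u)"
  using assms
proof (induction u rule: hr_tree_of.induct)
  case (1 u)
  show ?case
  proof (cases "u = []")
    case False
    let ?j = "first_extremum u"
    have "strict_mono_on (set v) h \<or> strict_antimono_on (set v) h" if "set v \<subseteq> set u" for v
      using "1.prems" that monotone_on_subset by blast
    then have IH: "hr_tree_of (map h (take ?j u)) = map_tree h (hr_tree_of (take ?j u))"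
        "hr_tree_of (map h (drop (Suc ?j) u)) = map_tree h (hr_tree_of (drop (Suc ?j) u))"
      using "1.IH" False by (simp_all add: set_take_subset set_drop_subset)
    show ?thesis
      using first_extremum_map[OF "1.prems"] first_extremum_less_length[OF False] False IH
      by (subst (1 2) hr_tree_of.simps) (simp add: take_map drop_map)
  qed simp
qed

lemma leaf_count_map_tree [simp]: "leaf_count (map_tree h t) = leaf_count t"
  by (induction t) auto

section \<open>Alternating words\<close>

fun alternating :: "bool \<Rightarrow> 'a::linorder list \<Rightarrow> bool" where
  "alternating up (x # y # zs) \<longleftrightarrow> (if up then x < y else y < x) \<and> alternating (\<not> up) (y # zs)"
| "alternating up _ \<longleftrightarrow> True"

lemma alternating_iff_nth:
  "alternating up u \<longleftrightarrow>
     (\<forall>i. Suc i < length u \<longrightarrow> (if even i = up then u ! i < u ! Suc i else u ! Suc i < u ! i))"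
proof (induction up u rule: alternating.induct)
  case (1 up x y zs)
  have all_nat_split: "(\<forall>i. P i) \<longleftrightarrow> P 0 \<and> (\<forall>i. P (Suc i))" for P :: "nat \<Rightarrow> bool"
    by (metis not0_implies_Suc)
  show ?case
    unfolding alternating.simps(1) "1.IH" by (subst (2) all_nat_split) auto
qed auto

lemma alternating_Cons:
  "alternating up (x # ys) \<longleftrightarrow>
     alternating (\<not> up) ys \<and> (ys \<noteq> [] \<longrightarrow> (if up then x < hd ys else hd ys < x))"
  by (cases ys) auto

lemma alternating_snoc:
  "alternating up (xs @ [y]) \<longleftrightarrow>
     alternating up xs \<and> (xs \<noteq> [] \<longrightarrow> (if odd (length xs) = up then last xs < y else y < last xs))"
  by (induction xs arbitrary: up rule: induct_list012) auto

lemma alternating_append: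
  "alternating up (xs @ y # ys) \<longleftrightarrow>
     alternating up (xs @ [y]) \<and> alternating (up = even (length xs)) (y # ys)"
  by (induction xs arbitrary: up rule: induct_list012) auto

lemma alternating_map_strict_mono:
  "strict_mono_on (set u) h \<Longrightarrow> alternating up (map h u) = alternating up u"
proof (induction up u rule: alternating.induct)
  case (1 up x y zs)
  have "strict_mono_on (set (y # zs)) h"
    using "1.prems" by (rule monotone_on_subset) auto
  then show ?case
    using "1.IH" "1.prems" by (simp add: strict_mono_on_less)
qed auto

lemma alternating_map_strict_antimono:
  "strict_antimono_on (set u) h \<Longrightarrow> alternating up (map h u) = alternating (\<not> up) u"
proof (induction up u rule: alternating.induct)
  case (1 up x y zs)
  have "h x < h y \<longleftrightarrow> y < x" "h y < h x \<longleftrightarrow> x < y"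
    using "1.prems" by (auto simp: monotone_on_def) (metis linorder_neqE less_asym)+
  moreover have "strict_antimono_on (set (y # zs)) h"
    using "1.prems" by (rule monotone_on_subset) auto
  ultimately show ?case
    using "1.IH" by auto
qed auto

section \<open>Counting arrangements of a finite set\<close>

lemma Min_less_Max:
  fixes S :: "'a::linorder set"
  assumes "finite S" "2 \<le> card S"
  shows "Min S < Max S"
proof -
  have "\<not> card S \<le> Suc 0"
    using assms(2) by simp
  then obtain x y where "x \<in> S" "y \<in> S" "x \<noteq> y"
    using card_le_Suc0_iff_eq[OF assms(1)] by blast
  then have "Min S \<le> x" "x \<le> Max S" "Min S \<le> y" "y \<le> Max S"
    using assms(1) by simp_all
  then have "Min S \<noteq> Max S"
    using \<open>x \<noteq> y\<close> by (metis antisym order.trans)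
  then show ?thesis
    using \<open>Min S \<le> x\<close> \<open>x \<le> Max S\<close> by (simp add: order.not_eq_order_implies_strict)
qed

lemma card_permutations_of_set_image:
  assumes "inj_on h S"
  shows "card {v \<in> permutations_of_set (h ` S). Q v} = card {u \<in> permutations_of_set S. Q (map h u)}"
proof -
  have "{v \<in> permutations_of_set (h ` S). Q v} = map h ` {u \<in> permutations_of_set S. Q (map h u)}"
    unfolding permutations_of_set_image_inj[OF assms] by blast
  moreover have "inj_on (map h) {u \<in> permutations_of_set S. Q (map h u)}"
    using assms by (intro inj_on_mapI) (auto simp: permutations_of_set_def inj_on_def)
  ultimately show ?thesis
    by (simp add: card_image)
qed

lemma strict_mono_on_bij_betw_extend:
  fixes h :: "'a::linorder \<Rightarrow> 'b::linorder"
  assumes h: "bij_betw h S S'" "strict_mono_on S h" and M: "\<forall>x\<in>S. x < M" "\<forall>y\<in>S'. y < M'"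
  shows "bij_betw (h(M := M')) (insert M S) (insert M' S')" "strict_mono_on (insert M S) (h(M := M'))"
proof -
  have "M \<notin> S"
    using M(1) by auto
  then have "bij_betw (h(M := M')) S S'"
    using h(1) by (subst bij_betw_cong[where g = h]) auto
  moreover have "bij_betw (h(M := M')) {M} {M'}"
    by (simp add: bij_betw_def)
  ultimately have "bij_betw (h(M := M')) (S \<union> {M}) (S' \<union> {M'})"
    by (rule bij_betw_combine) (use M(2) in auto)
  then show "bij_betw (h(M := M')) (insert M S) (insert M' S')"
    by simp
  show "strict_mono_on (insert M S) (h(M := M'))"
  proof (rule monotone_onI)
    fix x y assume xy: "x \<in> insert M S" "y \<in> insert M S" "x < y"
    have "y \<le> M"
      using xy(2) M(1) by (auto simp: order.order_iff_strict)
    then have x: "x \<in> S" "x \<noteq> M"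
      using xy(1,3) by auto
    show "(h(M := M')) x < (h(M := M')) y"
    proof (cases "y = M")
      case True
      then show ?thesis
        using x h(1) M(2) by (auto simp: bij_betw_def)
    next
      case False
      then show ?thesis
        using x xy h(2) by (auto simp: monotone_on_def)
    qed
  qed
qed

lemma ex_strict_mono_on_bij_betw:
  fixes S :: "'a::linorder set" and S' :: "'b::linorder set"
  assumes "finite S" "finite S'" "card S = card S'"
  shows "\<exists>h. bij_betw h S S' \<and> strict_mono_on S h"
  using assms
proof (induction "card S" arbitrary: S S')
  case 0
  then show ?case
    by (simp add: bij_betw_def monotone_on_def)
next
  case (Suc n)
  then have "S \<noteq> {}" "S' \<noteq> {}"
    by auto
  define M M' where "M = Max S" and "M' = Max S'"
  have M: "M \<in> S" "M' \<in> S'" "\<forall>x\<in>S - {M}. x < M" "\<forall>y\<in>S' - {M'}. y < M'"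
    using Suc.prems \<open>S \<noteq> {}\<close> \<open>S' \<noteq> {}\<close> unfolding M_def M'_def
    by (auto simp: order.not_eq_order_implies_strict)
  have card_eqs: "n = card (S - {M})" "card (S - {M}) = card (S' - {M'})"
    using Suc.hyps(2) Suc.prems M(1,2) by (simp_all add: card_Diff_singleton)
  have "\<exists>h. bij_betw h (S - {M}) (S' - {M'}) \<and> strict_mono_on (S - {M}) h"
    by (rule Suc.hyps(1)) (use card_eqs Suc.prems(1,2) in simp_all)
  then obtain h where "bij_betw h (S - {M}) (S' - {M'}) \<and> strict_mono_on (S - {M}) h" ..
  then have "bij_betw (h(M := M')) (insert M (S - {M})) (insert M' (S' - {M'}))"
    "strict_mono_on (insert M (S - {M})) (h(M := M'))"
    using strict_mono_on_bij_betw_extend[OF _ _ M(3,4)] by simp_all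
  then show ?case
    unfolding insert_Diff[OF M(1)] insert_Diff[OF M(2)] by blast
qed

lemma card_permutations_of_set_sum_hd:
  assumes "finite S" "S \<noteq> {}"
  shows "card {u \<in> permutations_of_set S. P u} =
    (\<Sum>b\<in>S. card {u \<in> permutations_of_set S. hd u = b \<and> P u})"
proof -
  have "{u \<in> permutations_of_set S. P u} = (\<Union>b\<in>S. {u \<in> permutations_of_set S. hd u = b \<and> P u})"
    using assms(2) by (auto simp: permutations_of_set_def intro!: hd_in_set)
  also have "card \<dots> = (\<Sum>b\<in>S. card {u \<in> permutations_of_set S. hd u = b \<and> P u})"
    by (rule card_UN_disjoint) (use assms in auto)
  finally show ?thesis .
qed

lemma card_permutations_of_set_hd:
  assumes "b \<in> S"
  shows "card {u \<in> permutations_of_set S. hd u = b \<and> P u} = card {v \<in> permutations_of_set (S - {b}). P (b # v)}"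
proof -
  have "{u \<in> permutations_of_set S. hd u = b \<and> P u} = Cons b ` {v \<in> permutations_of_set (S - {b}). P (b # v)}"
  proof (intro equalityI subsetI)
    fix u assume u: "u \<in> {u \<in> permutations_of_set S. hd u = b \<and> P u}"
    then obtain v where v: "u = b # v"
      using assms by (cases u) (auto simp: permutations_of_set_def)
    then have "v \<in> {v \<in> permutations_of_set (S - {b}). P (b # v)}"
      using u by (auto simp: permutations_of_set_def)
    then show "u \<in> Cons b ` {v \<in> permutations_of_set (S - {b}). P (b # v)}"
      unfolding v by (rule imageI)
  next
    fix u assume "u \<in> Cons b ` {v \<in> permutations_of_set (S - {b}). P (b # v)}"
    then obtain v where "v \<in> permutations_of_set (S - {b})" "P (b # v)" "u = b # v"
      by blast
    then show "u \<in> {u \<in> permutations_of_set S. hd u = b \<and> P u}"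
      using assms by (auto simp: permutations_of_set_def)
  qed
  moreover have "inj_on (Cons b) A" for A
    by (simp add: inj_on_def)
  ultimately show ?thesis
    by (simp add: card_image)
qed

lemma append_Cons_eq_append_Cons_first:
  assumes "xs @ x # ys = xs' @ x' # ys'" "x \<in> Z" "x' \<in> Z" "set xs \<inter> Z = {}" "set xs' \<inter> Z = {}"
  shows "xs = xs' \<and> x = x' \<and> ys = ys'"
  using assms
proof (induction xs arbitrary: xs')
  case Nil
  then show ?case
    by (cases xs') auto
next
  case (Cons a xs)
  then show ?case
    by (cases xs') auto
qed

lemma card_weighted_pairs_eq_sum:
  fixes X Y :: "'a set \<Rightarrow> 'a list set" and wX wY :: "'a list \<Rightarrow> nat"
  assumes "finite \<A>" "\<And>A. A \<in> \<A> \<Longrightarrow> finite (X A)" "\<And>A. A \<in> \<A> \<Longrightarrow> finite (Y A)"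
    and "\<And>A L. A \<in> \<A> \<Longrightarrow> L \<in> X A \<Longrightarrow> set L = A"
  shows "card {(L, R). (\<exists>A\<in>\<A>. L \<in> X A \<and> R \<in> Y A) \<and> wX L + wY R = k} =
    (\<Sum>A\<in>\<A>. \<Sum>k1\<le>k. card {L \<in> X A. wX L = k1} * card {R \<in> Y A. wY R = k - k1})"
proof -
  let ?Q = "\<lambda>A k1. {L \<in> X A. wX L = k1} \<times> {R \<in> Y A. wY R = k - k1}"
  have "{(L, R). (\<exists>A\<in>\<A>. L \<in> X A \<and> R \<in> Y A) \<and> wX L + wY R = k} = (\<Union>A\<in>\<A>. \<Union>k1\<le>k. ?Q A k1)"
    by force
  also have "card \<dots> = (\<Sum>A\<in>\<A>. card (\<Union>k1\<le>k. ?Q A k1))"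
  proof (rule card_UN_disjoint)
    show "\<forall>A\<in>\<A>. \<forall>B\<in>\<A>. A \<noteq> B \<longrightarrow> (\<Union>k1\<le>k. ?Q A k1) \<inter> (\<Union>k1\<le>k. ?Q B k1) = {}"
      using assms(4) by blast
  qed (use assms in auto)
  also have "\<dots> = (\<Sum>A\<in>\<A>. \<Sum>k1\<le>k. card (?Q A k1))"
    by (intro sum.cong refl card_UN_disjoint) (use assms in auto)
  finally show ?thesis
    by (simp add: card_cartesian_product)
qed

lemma card_concat_eq_sum:
  fixes X Y :: "'a set \<Rightarrow> 'a list set" and wX wY :: "'a list \<Rightarrow> nat" and c :: "'a set \<Rightarrow> 'a"
  assumes "finite \<A>" "\<And>A. A \<in> \<A> \<Longrightarrow> finite (X A)" "\<And>A. A \<in> \<A> \<Longrightarrow> finite (Y A)"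
    and set_X: "\<And>A L. A \<in> \<A> \<Longrightarrow> L \<in> X A \<Longrightarrow> set L = A"
    and Z: "\<And>A. A \<in> \<A> \<Longrightarrow> c A \<in> Z \<and> A \<inter> Z = {}"
  shows "card {L @ c A # R |A L R. A \<in> \<A> \<and> L \<in> X A \<and> R \<in> Y A \<and> wX L + wY R = k} =
    (\<Sum>A\<in>\<A>. \<Sum>k1\<le>k. card {L \<in> X A. wX L = k1} * card {R \<in> Y A. wY R = k - k1})"
proof -
  \<comment> \<open>The separator lies in Z, which the left factor avoids, so a word determines its factors.\<close>
  define P where "P = {(L, R). (\<exists>A\<in>\<A>. L \<in> X A \<and> R \<in> Y A) \<and> wX L + wY R = k}"
  define \<phi> where "\<phi> = (\<lambda>(L, R). L @ c (set L) # R)"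
  have inj: "inj_on \<phi> P"
  proof (rule inj_onI)
    fix p q assume "p \<in> P" "q \<in> P" "\<phi> p = \<phi> q"
    moreover obtain L R L' R' where pq: "p = (L, R)" "q = (L', R')"
      by fastforce
    ultimately obtain A A' where "A \<in> \<A>" "L \<in> X A" "A' \<in> \<A>" "L' \<in> X A'"
      and eq: "L @ c (set L) # R = L' @ c (set L') # R'"
      unfolding P_def \<phi>_def by auto
    then have "set L = A" "set L' = A'"
      using set_X by blast+
    then have "L = L' \<and> R = R'"
      using append_Cons_eq_append_Cons_first[OF eq, of Z] Z \<open>A \<in> \<A>\<close> \<open>A' \<in> \<A>\<close> by simp
    then show "p = q"
      using pq by simp
  qed
  have "{L @ c A # R |A L R. A \<in> \<A> \<and> L \<in> X A \<and> R \<in> Y A \<and> wX L + wY R = k} = \<phi> ` P"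
  proof (intro equalityI subsetI)
    fix u assume "u \<in> {L @ c A # R |A L R. A \<in> \<A> \<and> L \<in> X A \<and> R \<in> Y A \<and> wX L + wY R = k}"
    then obtain A L R where "u = L @ c A # R" "A \<in> \<A>" "L \<in> X A" "R \<in> Y A" "wX L + wY R = k"
      by blast
    then show "u \<in> \<phi> ` P"
      using set_X unfolding P_def \<phi>_def by (intro image_eqI[of _ _ "(L, R)"]) auto
  next
    fix u assume "u \<in> \<phi> ` P"
    then obtain L R where "(L, R) \<in> P" "u = \<phi> (L, R)"
      by auto
    then obtain A where "u = L @ c (set L) # R" "A \<in> \<A>" "L \<in> X A" "R \<in> Y A" "wX L + wY R = k"
      unfolding P_def \<phi>_def by auto
    moreover have "set L = A"
      using set_X calculation(2,3) .
    ultimately show "u \<in> {L @ c A # R |A L R. A \<in> \<A> \<and> L \<in> X A \<and> R \<in> Y A \<and> wX L + wY R = k}"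
      by blast
  qed
  also have "card (\<phi> ` P) = card P"
    using inj by (rule card_image)
  also have "\<dots> = (\<Sum>A\<in>\<A>. \<Sum>k1\<le>k. card {L \<in> X A. wX L = k1} * card {R \<in> Y A. wY R = k - k1})"
    unfolding P_def by (rule card_weighted_pairs_eq_sum[OF assms(1-4)])
  finally show ?thesis .
qed

section \<open>Up-down words by number of leaves\<close>

definition hr_leaves :: "'a::linorder list \<Rightarrow> nat" where
  "hr_leaves u = leaf_count (hr_tree_of u)"

lemma hr_leaves_map:
  "strict_mono_on (set u) h \<or> strict_antimono_on (set u) h \<Longrightarrow> hr_leaves (map h u) = hr_leaves u"
  unfolding hr_leaves_def by (simp add: hr_tree_of_map)

definition alt_count :: "bool \<Rightarrow> 'a::linorder set \<Rightarrow> nat \<Rightarrow> nat" where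
  "alt_count up S k = card {u \<in> permutations_of_set S. alternating up u \<and> hr_leaves u = k}"

lemma alt_count_eq_if_card_eq:
  fixes S :: "'a::linorder set" and S' :: "'b::linorder set"
  assumes "finite S" "finite S'" "card S = card S'"
  shows "alt_count up S k = alt_count up S' k"
proof -
  obtain h where h: "bij_betw h S S'" "strict_mono_on S h"
    using ex_strict_mono_on_bij_betw[OF assms] by blast
  have "alt_count up S' k =
      card {u \<in> permutations_of_set S. alternating up (map h u) \<and> hr_leaves (map h u) = k}"
    unfolding alt_count_def using card_permutations_of_set_image[of h S] h(1)
    by (simp add: bij_betw_def)
  also have "\<dots> = alt_count up S k"
    unfolding alt_count_def
  proof (intro arg_cong[where f = card] Collect_cong conj_cong refl)
    fix u assume "u \<in> permutations_of_set S"
    then have "strict_mono_on (set u) h"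
      using h(2) by (simp add: permutations_of_set_def)
    then show "alternating up (map h u) = alternating up u" "(hr_leaves (map h u) = k) = (hr_leaves u = k)"
      by (simp_all add: alternating_map_strict_mono hr_leaves_map)
  qed
  finally show ?thesis ..
qed

lemma alt_count_down_eq_up:
  fixes S :: "'a::linordered_ab_group_add set"
  assumes "finite S"
  shows "alt_count False S k = alt_count True S k"
proof -
  have anti: "strict_antimono_on A (uminus :: 'a \<Rightarrow> 'a)" for A
    by (simp add: monotone_on_def)
  have "alt_count True (uminus ` S) k =
      card {u \<in> permutations_of_set S. alternating True (map uminus u) \<and> hr_leaves (map uminus u) = k}"
    unfolding alt_count_def by (rule card_permutations_of_set_image) simp
  also have "\<dots> = alt_count False S k"
    unfolding alt_count_def by (simp add: alternating_map_strict_antimono[OF anti] hr_leaves_map[OF disjI2, OF anti])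
  finally have "alt_count False S k = alt_count True (uminus ` S) k" ..
  also have "\<dots> = alt_count True S k"
    using assms by (intro alt_count_eq_if_card_eq) (auto simp: card_image)
  finally show ?thesis .
qed

lemma hr_leaves_append:
  assumes "L \<noteq> []" and "x = Min (set (L @ x # R)) \<or> x = Max (set (L @ x # R))"
    and "\<And>y. y \<in> set L \<Longrightarrow> y \<noteq> Min (set (L @ x # R)) \<and> y \<noteq> Max (set (L @ x # R))"
  shows "hr_leaves (L @ x # R) = hr_leaves L + hr_leaves R"
  using assms(1) hr_tree_of_append[OF assms(2,3)] unfolding hr_leaves_def by simp

lemma alternating_split_at_extremum:
  fixes L R :: "'a::linorder list"
  assumes "L \<noteq> []" "\<forall>y\<in>set L. m < y \<and> y < M" "\<forall>y\<in>set R. m \<le> y \<and> y \<le> M" "x \<notin> set R"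
    and x: "x = (if even (length L) then m else M)"
  shows "alternating True (L @ x # R) \<longleftrightarrow> alternating True L \<and> alternating (odd (length L)) R"
proof -
  have "m < last L" "last L < M"
    using assms(1,2) last_in_set by blast+
  then have snoc: "alternating True (L @ [x]) \<longleftrightarrow> alternating True L"
    using assms(1) x by (simp add: alternating_snoc)
  have cons: "if even (length L) then x < hd R else hd R < x" if "R \<noteq> []"
  proof -
    have "m \<le> hd R" "hd R \<le> M" "hd R \<noteq> x"
      using that assms(3,4) hd_in_set by metis+
    then show ?thesis
      using x by (auto simp: order_le_less)
  qed
  have "alternating True (L @ x # R) \<longleftrightarrow>
      alternating True (L @ [x]) \<and> alternating (even (length L)) (x # R)"
    using alternating_append[of True L x R] by simp
  then show ?thesis
    using snoc cons by (simp add: alternating_Cons)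
qed

lemma split_at_parity_extremum:
  fixes u L R :: "'a::linorder list"
  defines "m \<equiv> Min (set u)" and "M \<equiv> Max (set u)"
  assumes u: "u = L @ x # R" and dist: "distinct u" and L: "L \<noteq> []" "set L \<inter> {m, M} = {}"
    and x: "x = (if even (length L) then m else M)"
  shows "alternating True u \<longleftrightarrow> alternating True L \<and> alternating (odd (length L)) R"
    and "hr_leaves u = hr_leaves L + hr_leaves R"
proof -
  have bounds: "m \<le> y" "y \<le> M" if "y \<in> set u" for y
    using that unfolding m_def M_def by simp_all
  then have "\<forall>y\<in>set L. m < y \<and> y < M"
    using L(2) unfolding u by (fastforce simp: order.strict_iff_order)
  moreover have "\<forall>y\<in>set R. m \<le> y \<and> y \<le> M"
    using bounds unfolding u by simp
  moreover have "x \<notin> set R"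
    using dist u by simp
  ultimately show "alternating True u \<longleftrightarrow> alternating True L \<and> alternating (odd (length L)) R"
    unfolding u using alternating_split_at_extremum[OF L(1) _ _ _ x] by blast
  have "x = Min (set u) \<or> x = Max (set u)"
    using x unfolding m_def M_def by simp
  moreover have "y \<noteq> Min (set u) \<and> y \<noteq> Max (set u)" if "y \<in> set L" for y
    using L(2) that unfolding m_def M_def by auto
  ultimately show "hr_leaves u = hr_leaves L + hr_leaves R"
    using hr_leaves_append[of L x R, folded u, OF L(1)] by blast
qed

lemma alternating_first_extremum_split:
  fixes u :: "'a::linorder list"
  defines "m \<equiv> Min (set u)" and "M \<equiv> Max (set u)"
  assumes alt: "alternating True u" and len: "2 \<le> length u" and hd: "hd u \<noteq> m"
  obtains L R where "u = L @ (if even (length L) then m else M) # R" "L \<noteq> []" "set L \<inter> {m, M} = {}"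
proof -
  have "u \<noteq> []"
    using len by auto
  define j where "j = first_extremum u"
  define L R where "L = take j u" and "R = drop (Suc j) u"
  define x where "x = u ! j"
  have u: "u = L @ x # R"
    using first_extremum_less_length[OF \<open>u \<noteq> []\<close>] unfolding L_def R_def x_def j_def
    by (simp add: id_take_nth_drop[symmetric])
  have x: "x = m \<or> x = M"
    using nth_first_extremum[OF \<open>u \<noteq> []\<close>] unfolding m_def M_def x_def j_def .
  have L: "set L \<inter> {m, M} = {}"
    using nth_before_first_extremum[OF \<open>u \<noteq> []\<close>] unfolding L_def j_def m_def M_def
    by (auto simp: in_set_conv_nth)
  have bounds: "m \<le> y" "y \<le> M" if "y \<in> set u" for y
    using that unfolding m_def M_def by simp_all
  have "L \<noteq> []"
  proof
    assume "L = []"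
    then have "hd u = M"
      using u x hd by simp
    obtain z y v where zyv: "u = z # y # v"
      using len by (cases u; cases "tl u") auto
    then have "z < y"
      using alt by simp
    moreover have "z = M" "y \<le> M"
      using \<open>hd u = M\<close> bounds(2)[of y] zyv by simp_all
    ultimately show False
      by simp
  qed
  have "m < last L" "last L < M"
    using L bounds[of "last L"] last_in_set[OF \<open>L \<noteq> []\<close>] unfolding u
    by (auto simp: order.strict_iff_order)
  moreover have "alternating True (L @ [x])"
    using alt alternating_append[of True L x R] u by simp
  ultimately have "x = (if even (length L) then m else M)"
    using x \<open>L \<noteq> []\<close> by (auto simp: alternating_snoc)
  then show ?thesis
    using that u \<open>L \<noteq> []\<close> L by blast
qed

(* The first extremal letter of an up-down word that does not start with its minimum is the
   minimum after a prefix of even length and the maximum after one of odd length. *)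
definition parity_extremum :: "'a::linorder set \<Rightarrow> 'a set \<Rightarrow> 'a" where
  "parity_extremum S A = (if even (card A) then Min S else Max S)"

lemma alternating_permutation_split:
  fixes S :: "'a::linorder set"
  assumes u: "u \<in> permutations_of_set S" "alternating True u" and "hd u \<noteq> Min S" "2 \<le> card S"
  obtains L R where "u = L @ parity_extremum S (set L) # R" "L \<noteq> []" "distinct L"
    "set L \<subseteq> S - {Min S, Max S}" "R \<in> permutations_of_set (S - set L - {parity_extremum S (set L)})"
    "alternating True L" "alternating (odd (card (set L))) R" "hr_leaves u = hr_leaves L + hr_leaves R"
proof -
  have set_u: "set u = S" and dist: "distinct u"
    using u(1) by (simp_all add: permutations_of_set_def)
  then have "2 \<le> length u"
    using assms(4) distinct_card by metis
  then obtain L R where uLR: "u = L @ (if even (length L) then Min S else Max S) # R" "L \<noteq> []"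
      "set L \<inter> {Min S, Max S} = {}"
    using alternating_first_extremum_split[OF u(2), unfolded set_u] assms(3) by blast
  have "distinct L"
    using dist uLR(1) by simp
  then have c: "parity_extremum S (set L) = (if even (length L) then Min S else Max S)"
    unfolding parity_extremum_def by (simp add: distinct_card)
  note split = split_at_parity_extremum[OF uLR(1)[folded set_u] dist uLR(2), unfolded set_u, OF uLR(3) refl]
  have "set R = S - set L - {parity_extremum S (set L)}"
    using dist set_u uLR(1) unfolding c by auto
  moreover have "set L \<subseteq> S - {Min S, Max S}"
    using set_u uLR(1,3) by auto
  ultimately show ?thesis
    using uLR(1,2) c split dist \<open>distinct L\<close> u(2)
    by (intro that[of L R]) (simp_all add: permutations_of_set_def distinct_card)
qed

lemma alternating_permutation_concat:
  fixes S :: "'a::linorder set"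
  assumes "finite S" "A \<subseteq> S - {Min S, Max S}" "L \<in> permutations_of_set A" "L \<noteq> []"
    "R \<in> permutations_of_set (S - A - {parity_extremum S A})"
  shows "L @ parity_extremum S A # R \<in> permutations_of_set S"
    and "alternating True (L @ parity_extremum S A # R) \<longleftrightarrow> alternating True L \<and> alternating (odd (card A)) R"
    and "hr_leaves (L @ parity_extremum S A # R) = hr_leaves L + hr_leaves R"
proof -
  have "S \<noteq> {}"
    using assms(2-4) by (auto simp: permutations_of_set_def)
  then have "parity_extremum S A \<in> S - A"
    using assms(1,2) unfolding parity_extremum_def by auto
  then have set_u: "set (L @ parity_extremum S A # R) = S" and dist: "distinct (L @ parity_extremum S A # R)"
    using assms(2,3,5) by (auto simp: permutations_of_set_def)
  then show "L @ parity_extremum S A # R \<in> permutations_of_set S"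
    by (simp add: permutations_of_set_def)
  have "length L = card A" "set L \<inter> {Min S, Max S} = {}"
    using assms(2,3) by (auto simp: permutations_of_set_def distinct_card)
  moreover from this have "parity_extremum S A = (if even (length L) then Min S else Max S)"
    unfolding parity_extremum_def by simp
  ultimately show "alternating True (L @ parity_extremum S A # R) \<longleftrightarrow>
      alternating True L \<and> alternating (odd (card A)) R"
    and "hr_leaves (L @ parity_extremum S A # R) = hr_leaves L + hr_leaves R"
    using split_at_parity_extremum[OF refl dist assms(4), unfolded set_u] by simp_all
qed

lemma hd_alternating_eq_concat:
  fixes S :: "'a::linorder set"
  assumes "finite S" "2 \<le> card S" "a \<noteq> Min S"
  shows "{u \<in> permutations_of_set S. hd u = a \<and> alternating True u \<and> hr_leaves u = k} =
    {L @ parity_extremum S A # R |A L R. A \<in> {A. A \<subseteq> S - {Min S, Max S} \<and> a \<in> A} \<and>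
       L \<in> {L \<in> permutations_of_set A. hd L = a \<and> alternating True L} \<and>
       R \<in> {R \<in> permutations_of_set (S - A - {parity_extremum S A}). alternating (odd (card A)) R} \<and>
       hr_leaves L + hr_leaves R = k}"
  (is "?U = ?V")
proof (intro equalityI subsetI)
  fix u assume u: "u \<in> ?U"
  then obtain L R where LR: "u = L @ parity_extremum S (set L) # R" "L \<noteq> []" "distinct L"
    "set L \<subseteq> S - {Min S, Max S}" "R \<in> permutations_of_set (S - set L - {parity_extremum S (set L)})"
    "alternating True L" "alternating (odd (card (set L))) R" "hr_leaves u = hr_leaves L + hr_leaves R"
    using alternating_permutation_split[of u S] assms(2,3) by blast
  then have "hd L = a" "set L \<in> {A. A \<subseteq> S - {Min S, Max S} \<and> a \<in> A}"
    using u by auto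
  then show "u \<in> ?V"
    using LR u by (auto simp: permutations_of_set_def)
next
  fix u assume "u \<in> ?V"
  then obtain A L R where u: "u = L @ parity_extremum S A # R" "A \<subseteq> S - {Min S, Max S}" "a \<in> A"
      "L \<in> permutations_of_set A" "hd L = a" "alternating True L"
      "R \<in> permutations_of_set (S - A - {parity_extremum S A})" "alternating (odd (card A)) R"
      "hr_leaves L + hr_leaves R = k"
    by blast
  then have "L \<noteq> []"
    by (auto simp: permutations_of_set_def)
  then show "u \<in> ?U"
    using alternating_permutation_concat[OF assms(1) u(2,4) _ u(7)] u by simp
qed

lemma card_hd_alternating_decomp:
  fixes S :: "'a::linorder set"
  assumes "finite S" "2 \<le> card S" "a \<noteq> Min S"
  shows "card {u \<in> permutations_of_set S. hd u = a \<and> alternating True u \<and> hr_leaves u = k} =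
    (\<Sum>A | A \<subseteq> S - {Min S, Max S} \<and> a \<in> A. \<Sum>k1\<le>k.
       card {L \<in> permutations_of_set A. hd L = a \<and> alternating True L \<and> hr_leaves L = k1} *
       alt_count (odd (card A)) (S - A - {parity_extremum S A}) (k - k1))"
proof -
  let ?\<A> = "{A. A \<subseteq> S - {Min S, Max S} \<and> a \<in> A}"
  let ?c = "parity_extremum S"
  let ?X = "\<lambda>A. {L \<in> permutations_of_set A. hd L = a \<and> alternating True L}"
  let ?Y = "\<lambda>A. {R \<in> permutations_of_set (S - A - {?c A}). alternating (odd (card A)) R}"
  have "finite ?\<A>"
    by (rule finite_subset[of _ "Pow S"]) (use assms(1) in auto)
  then have "card {u \<in> permutations_of_set S. hd u = a \<and> alternating True u \<and> hr_leaves u = k} =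
      (\<Sum>A\<in>?\<A>. \<Sum>k1\<le>k. card {L \<in> ?X A. hr_leaves L = k1} * card {R \<in> ?Y A. hr_leaves R = k - k1})"
    unfolding hd_alternating_eq_concat[OF assms]
    by (rule card_concat_eq_sum[where Z = "{Min S, Max S}" and c = ?c])
      (auto dest: permutations_of_setD simp: parity_extremum_def)
  also have "\<dots> = (\<Sum>A\<in>?\<A>. \<Sum>k1\<le>k.
       card {L \<in> permutations_of_set A. hd L = a \<and> alternating True L \<and> hr_leaves L = k1} *
       alt_count (odd (card A)) (S - A - {?c A}) (k - k1))"
    unfolding alt_count_def by (simp add: conj_assoc)
  finally show ?thesis .
qed

lemma hr_leaves_Cons_extremum:
  assumes "v \<noteq> []" "x = Min (set (x # v)) \<or> x = Max (set (x # v))"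
  shows "hr_leaves (x # v) = hr_leaves v"
  using hr_tree_of_append[of x "[]" v] assms unfolding hr_leaves_def by simp

lemma card_hd_min_alternating:
  fixes S :: "'a::linorder set"
  assumes "finite S" "2 \<le> card S"
  shows "card {u \<in> permutations_of_set S. hd u = Min S \<and> alternating True u \<and> hr_leaves u = k} =
    alt_count False (S - {Min S}) k"
proof -
  have "S \<noteq> {}"
    using assms(2) by auto
  then have m: "Min S \<in> S"
    using assms(1) by simp
  have "alternating True (Min S # v) \<longleftrightarrow> alternating False v" "hr_leaves (Min S # v) = hr_leaves v"
    if v: "v \<in> permutations_of_set (S - {Min S})" for v
  proof -
    have "card (set v) = card S - 1"
      using v m assms(1) by (simp add: permutations_of_set_def)
    then have "v \<noteq> []"
      using assms(2) by auto
    then have "hd v \<in> S - {Min S}"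
      using v hd_in_set by (fastforce simp: permutations_of_set_def)
    then have "Min S < hd v"
      using assms(1) by (auto simp: order.strict_iff_order)
    then show "alternating True (Min S # v) \<longleftrightarrow> alternating False v"
      by (simp add: alternating_Cons)
    have "set (Min S # v) = S"
      using v m by (auto simp: permutations_of_set_def)
    then show "hr_leaves (Min S # v) = hr_leaves v"
      using hr_leaves_Cons_extremum[OF \<open>v \<noteq> []\<close>] by simp
  qed
  then show ?thesis
    unfolding card_permutations_of_set_hd[OF m] alt_count_def
    by (intro arg_cong[where f = card] Collect_cong conj_cong refl) auto
qed

section \<open>Andre words by number of descents\<close>

definition every_triple :: "('a list \<Rightarrow> 'a \<Rightarrow> 'a \<Rightarrow> 'a \<Rightarrow> 'a list \<Rightarrow> bool) \<Rightarrow> 'a list \<Rightarrow> bool" where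
  "every_triple C p \<longleftrightarrow> (\<forall>xs x y z ys. p = xs @ x # y # z # ys \<longrightarrow> C xs x y z ys)"

lemma every_triple_short: "length p \<le> 2 \<Longrightarrow> every_triple C p"
  unfolding every_triple_def by auto

lemma append_Cons_eq_triple_cases:
  assumes "\<alpha> @ m # \<beta> = xs @ x # y # z # ys"
  shows "(\<exists>ys'. \<alpha> = xs @ x # y # z # ys' \<and> ys = ys' @ m # \<beta>) \<or>
    (\<alpha> = xs @ [x, y] \<and> z = m \<and> ys = \<beta>) \<or>
    (\<alpha> = xs @ [x] \<and> y = m \<and> \<beta> = z # ys) \<or>
    (\<alpha> = xs \<and> x = m \<and> \<beta> = y # z # ys) \<or>
    (\<exists>xs'. xs = \<alpha> @ m # xs' \<and> \<beta> = xs' @ x # y # z # ys)"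
  using assms
proof (induction xs arbitrary: \<alpha>)
  case Nil
  then show ?case
    by (cases \<alpha>; cases "tl \<alpha>"; cases "tl (tl \<alpha>)") auto
next
  case (Cons w xs)
  then show ?case
    by (cases \<alpha>) auto
qed

lemma every_triple_append_Cons:
  "every_triple C (\<alpha> @ m # \<beta>) \<longleftrightarrow>
    (\<forall>xs x y z ys. \<alpha> = xs @ x # y # z # ys \<longrightarrow> C xs x y z (ys @ m # \<beta>)) \<and>
    (\<forall>xs x y. \<alpha> = xs @ [x, y] \<longrightarrow> C xs x y m \<beta>) \<and>
    (\<forall>xs x z ys. \<alpha> = xs @ [x] \<longrightarrow> \<beta> = z # ys \<longrightarrow> C xs x m z ys) \<and>
    (\<forall>y z ys. \<beta> = y # z # ys \<longrightarrow> C \<alpha> m y z ys) \<and>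
    (\<forall>xs x y z ys. \<beta> = xs @ x # y # z # ys \<longrightarrow> C (\<alpha> @ m # xs) x y z ys)"
  unfolding every_triple_def
proof (intro iffI allI impI)
  fix xs x y z ys
  assume R: "(\<forall>xs x y z ys. \<alpha> = xs @ x # y # z # ys \<longrightarrow> C xs x y z (ys @ m # \<beta>)) \<and>
    (\<forall>xs x y. \<alpha> = xs @ [x, y] \<longrightarrow> C xs x y m \<beta>) \<and>
    (\<forall>xs x z ys. \<alpha> = xs @ [x] \<longrightarrow> \<beta> = z # ys \<longrightarrow> C xs x m z ys) \<and>
    (\<forall>y z ys. \<beta> = y # z # ys \<longrightarrow> C \<alpha> m y z ys) \<and>
    (\<forall>xs x y z ys. \<beta> = xs @ x # y # z # ys \<longrightarrow> C (\<alpha> @ m # xs) x y z ys)"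
    and "\<alpha> @ m # \<beta> = xs @ x # y # z # ys"
  from append_Cons_eq_triple_cases[OF this(2)] R show "C xs x y z ys"
    by auto
qed auto

(* Conditions (i) and (iii) of type B Andre permutations at the letter y of xs @ x # y # z # ys:
   the two takeWhile factors are w2, read backwards, and w4 of the y-factorization. *)
definition andre_triple :: "'a::linorder list \<Rightarrow> 'a \<Rightarrow> 'a \<Rightarrow> 'a \<Rightarrow> 'a list \<Rightarrow> bool" where
  "andre_triple xs x y z ys \<longleftrightarrow> \<not> (y < x \<and> z < y) \<and>
     (y < x \<and> y < z \<longrightarrow>
        Max (set (takeWhile (\<lambda>v. y < v) (x # rev xs))) < Max (set (takeWhile (\<lambda>v. y < v) (z # ys))))"

(* For p = 0 # w the triples cover the letters w_1, ..., w_(n-1); the last conjunct is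
   condition (ii). *)
definition andre_word :: "'a::linorder list \<Rightarrow> bool" where
  "andre_word p \<longleftrightarrow> every_triple andre_triple p \<and> (2 \<le> length p \<longrightarrow> last (butlast p) < last p)"

lemma andre_word_Nil [simp]: "andre_word []" and andre_word_single [simp]: "andre_word [x]"
  unfolding andre_word_def by (auto intro: every_triple_short)

lemma takeWhile_append_Cons_stop: "\<not> P m \<Longrightarrow> takeWhile P (xs @ m # ys) = takeWhile P xs"
  by (induction xs) auto

lemma andre_triple_append_min_right:
  assumes "m < y"
  shows "andre_triple xs x y z (ys @ m # \<beta>) \<longleftrightarrow> andre_triple xs x y z ys"
proof -
  have "takeWhile (\<lambda>v. y < v) (z # ys @ m # \<beta>) = takeWhile (\<lambda>v. y < v) (z # ys)"
    using takeWhile_append_Cons_stop[of "\<lambda>v. y < v" m "z # ys" \<beta>] assms by simp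
  then show ?thesis
    unfolding andre_triple_def by (simp only:)
qed

lemma andre_triple_append_min_left:
  assumes "m < y"
  shows "andre_triple (\<alpha> @ m # xs) x y z ys \<longleftrightarrow> andre_triple xs x y z ys"
proof -
  have "takeWhile (\<lambda>v. y < v) (x # rev (\<alpha> @ m # xs)) = takeWhile (\<lambda>v. y < v) (x # rev xs)"
    using takeWhile_append_Cons_stop[of "\<lambda>v. y < v" m "x # rev xs" "rev \<alpha>"] assms by simp
  then show ?thesis
    unfolding andre_triple_def by (simp only:)
qed

lemma andre_triple_min_first: "m < y \<Longrightarrow> andre_triple \<alpha> m y z ys"
  unfolding andre_triple_def by (auto dest: order.asym)

lemma all_andre_triples_ending_at_min:
  assumes "distinct \<alpha>" "\<forall>v \<in> set \<alpha>. m < v"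
  shows "(\<forall>xs x y. \<alpha> = xs @ [x, y] \<longrightarrow> andre_triple xs x y m \<beta>) \<longleftrightarrow>
    (2 \<le> length \<alpha> \<longrightarrow> last (butlast \<alpha>) < last \<alpha>)"
proof (cases "2 \<le> length \<alpha>")
  case True
  obtain \<alpha>' y where "\<alpha> = \<alpha>' @ [y]"
    using True by (cases \<alpha> rule: rev_cases) auto
  moreover obtain xs x where "\<alpha>' = xs @ [x]"
    using True \<open>\<alpha> = \<alpha>' @ [y]\<close> by (cases \<alpha>' rule: rev_cases) auto
  ultimately have "\<alpha> = xs @ [x, y]"
    by simp
  then show ?thesis
    using assms unfolding andre_triple_def by (auto simp: butlast_append)
qed (auto simp: numeral_2_eq_2)

lemma all_andre_triples_centred_at_min:
  assumes "\<forall>v \<in> set \<alpha> \<union> set \<beta>. m < v"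
  shows "(\<forall>xs x z ys. \<alpha> = xs @ [x] \<longrightarrow> \<beta> = z # ys \<longrightarrow> andre_triple xs x m z ys) \<longleftrightarrow>
    (\<alpha> \<noteq> [] \<longrightarrow> \<beta> \<noteq> [] \<longrightarrow> Max (set \<alpha>) < Max (set \<beta>))"
proof (cases "\<alpha> = [] \<or> \<beta> = []")
  case False
  then obtain xs x z ys where \<alpha>\<beta>: "\<alpha> = xs @ [x]" "\<beta> = z # ys"
    by (cases \<alpha> rule: rev_cases; cases \<beta>) auto
  have tw: "takeWhile (\<lambda>v. m < v) (x # rev xs) = x # rev xs" "takeWhile (\<lambda>v. m < v) (z # ys) = z # ys"
    using assms \<alpha>\<beta> by (simp_all add: takeWhile_eq_all_conv)
  have "m < x" "m < z"
    using assms \<alpha>\<beta> by auto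
  then have "andre_triple xs x m z ys \<longleftrightarrow> Max (set \<alpha>) < Max (set \<beta>)"
    unfolding andre_triple_def tw \<alpha>\<beta> by (auto simp: Un_commute)
  then show ?thesis
    using \<alpha>\<beta> by auto
qed auto

lemma andre_word_split_at_min:
  assumes dist: "distinct (\<alpha> @ m # \<beta>)" and min: "\<forall>v \<in> set \<alpha> \<union> set \<beta>. m < v"
    and ne: "\<alpha> \<noteq> [] \<or> \<beta> \<noteq> []"
  shows "andre_word (\<alpha> @ m # \<beta>) \<longleftrightarrow>
    \<beta> \<noteq> [] \<and> andre_word \<alpha> \<and> andre_word \<beta> \<and> (\<alpha> \<noteq> [] \<longrightarrow> Max (set \<alpha>) < Max (set \<beta>))"
proof -
  have T1: "(\<forall>xs x y z ys. \<alpha> = xs @ x # y # z # ys \<longrightarrow> andre_triple xs x y z (ys @ m # \<beta>)) \<longleftrightarrow>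
      every_triple andre_triple \<alpha>"
    unfolding every_triple_def
    by (intro all_cong1 imp_cong refl andre_triple_append_min_right) (use min in simp)
  have T5: "(\<forall>xs x y z ys. \<beta> = xs @ x # y # z # ys \<longrightarrow> andre_triple (\<alpha> @ m # xs) x y z ys) \<longleftrightarrow>
      every_triple andre_triple \<beta>"
    unfolding every_triple_def
    by (intro all_cong1 imp_cong refl andre_triple_append_min_left) (use min in simp)
  have T4: "\<forall>y z ys. \<beta> = y # z # ys \<longrightarrow> andre_triple \<alpha> m y z ys"
    using min by (auto intro: andre_triple_min_first)
  have T2: "(\<forall>xs x y. \<alpha> = xs @ [x, y] \<longrightarrow> andre_triple xs x y m \<beta>) \<longleftrightarrow>
      (2 \<le> length \<alpha> \<longrightarrow> last (butlast \<alpha>) < last \<alpha>)"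
    using dist min by (intro all_andre_triples_ending_at_min) auto
  have T3: "(\<forall>xs x z ys. \<alpha> = xs @ [x] \<longrightarrow> \<beta> = z # ys \<longrightarrow> andre_triple xs x m z ys) \<longleftrightarrow>
      (\<alpha> \<noteq> [] \<longrightarrow> \<beta> \<noteq> [] \<longrightarrow> Max (set \<alpha>) < Max (set \<beta>))"
    using min by (rule all_andre_triples_centred_at_min)
  have last_ascent: "(2 \<le> length (\<alpha> @ m # \<beta>) \<longrightarrow> last (butlast (\<alpha> @ m # \<beta>)) < last (\<alpha> @ m # \<beta>)) \<longleftrightarrow>
      \<beta> \<noteq> [] \<and> (2 \<le> length \<beta> \<longrightarrow> last (butlast \<beta>) < last \<beta>)"
  proof (cases \<beta> rule: rev_cases)
    case Nil
    then have "\<alpha> \<noteq> []"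
      using ne by simp
    then have "m < last \<alpha>"
      using min last_in_set by blast
    then show ?thesis
      using Nil \<open>\<alpha> \<noteq> []\<close> by (auto simp: butlast_append Suc_le_eq)
  next
    case (snoc \<beta>' b)
    then show ?thesis
      using min by (cases \<beta>') (auto simp: butlast_append)
  qed
  show ?thesis
    unfolding andre_word_def every_triple_append_Cons T1 T2 T3 T5 last_ascent using T4 by blast
qed

fun descents :: "'a::linorder list \<Rightarrow> nat" where
  "descents (x # y # zs) = (if y < x then 1 else 0) + descents (y # zs)"
| "descents _ = 0"

lemma descents_eq_card: "descents p = card {i. Suc i < length p \<and> p ! Suc i < p ! i}"
proof (induction p rule: descents.induct)
  case (1 x y zs)
  have shift: "{i. P i} = (if P 0 then {0} else {}) \<union> Suc ` {i. P (Suc i)}" for P :: "nat \<Rightarrow> bool"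
  proof (intro equalityI subsetI)
    fix i assume "i \<in> {i. P i}"
    then show "i \<in> (if P 0 then {0} else {}) \<union> Suc ` {i. P (Suc i)}"
      by (cases i) auto
  qed (auto split: if_splits)
  have "finite {i. Suc i < length (y # zs) \<and> (y # zs) ! Suc i < (y # zs) ! i}"
    by (rule finite_subset[of _ "{..<length (y # zs)}"]) auto
  then show ?case
    using "1.IH" by (subst shift) (simp add: card_image)
qed simp_all

lemma descents_append: "descents (xs @ y # ys) = descents (xs @ [y]) + descents (y # ys)"
  by (induction xs rule: induct_list012) auto

lemma descents_split_at_min:
  assumes "L \<noteq> []" "R \<noteq> []" "m < last L" "m < hd R"
  shows "descents (L @ m # R) = descents L + 1 + descents R"
proof -
  obtain L' l where L: "L = L' @ [l]"
    using assms(1) by (cases L rule: rev_cases) auto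
  obtain b r where R: "R = b # r"
    using assms(2) by (cases R) auto
  show ?thesis
    using descents_append[of L m R] descents_append[of L' l "[m]"] assms(3,4) L R by simp
qed

definition andre_count :: "'a::linorder set \<Rightarrow> nat \<Rightarrow> nat" where
  "andre_count S k = card {u \<in> permutations_of_set S. andre_word u \<and> Suc (descents u) = k}"

lemma andre_split_at_min:
  assumes u: "u = L @ Min (set u) # R" and dist: "distinct u" and L: "L \<noteq> []"
  shows "andre_word u \<longleftrightarrow> R \<noteq> [] \<and> andre_word L \<and> andre_word R \<and> Max (set L) < Max (set R)"
    and "R \<noteq> [] \<Longrightarrow> Suc (descents u) = Suc (descents L) + Suc (descents R)"
proof -
  define m where "m = Min (set u)"
  have u': "u = L @ m # R"
    using u unfolding m_def .
  have "m \<le> v" if "v \<in> set u" for v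
    using that unfolding m_def by simp
  moreover have "set L \<union> set R \<subseteq> set u" "m \<notin> set L \<union> set R"
    using dist unfolding u' by auto
  ultimately have min: "\<forall>v \<in> set L \<union> set R. m < v"
    by (auto simp: order.strict_iff_order)
  show "andre_word u \<longleftrightarrow> R \<noteq> [] \<and> andre_word L \<and> andre_word R \<and> Max (set L) < Max (set R)"
    using andre_word_split_at_min[OF dist[unfolded u'] min] L unfolding u' by auto
  assume "R \<noteq> []"
  moreover have "m < last L" "m < hd R" if "R \<noteq> []"
    using min L that by auto
  ultimately show "Suc (descents u) = Suc (descents L) + Suc (descents R)"
    using descents_split_at_min[OF L] unfolding u' by simp
qed

lemma andre_permutation_split:
  fixes S :: "'a::linorder set"
  assumes u: "u \<in> permutations_of_set S" "andre_word u" and "hd u \<noteq> Min S" "2 \<le> card S"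
  obtains L R where "u = L @ Min S # R" "L \<noteq> []" "distinct L" "set L \<subseteq> S - {Min S, Max S}"
    "R \<in> permutations_of_set (S - set L - {Min S})" "andre_word L" "andre_word R"
    "Suc (descents u) = Suc (descents L) + Suc (descents R)"
proof -
  have set_u: "set u = S" and dist: "distinct u"
    using u(1) by (simp_all add: permutations_of_set_def)
  have "finite S" "S \<noteq> {}"
    using assms(4) by (auto intro: card_ge_0_finite)
  define m M where "m = Min S" and "M = Max S"
  have "m \<in> S"
    using \<open>finite S\<close> \<open>S \<noteq> {}\<close> unfolding m_def by simp
  then obtain L R where uLR: "u = L @ m # R"
    using set_u by (metis split_list)
  then have "L \<noteq> []"
    using assms(3) unfolding m_def by auto
  note split = andre_split_at_min[OF uLR[unfolded m_def, folded set_u] dist this, unfolded set_u,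
      folded m_def]
  have R: "R \<noteq> []" "andre_word L" "andre_word R" "Max (set L) < Max (set R)"
    using split(1) u(2) by auto
  have set_LR: "insert m (set L \<union> set R) = S"
    using set_u unfolding uLR by simp
  have dist': "distinct L" "distinct R" "m \<notin> set L" "m \<notin> set R" "set L \<inter> set R = {}"
    using dist unfolding uLR by auto
  have "set R \<subseteq> S"
    using set_LR by blast
  then have "Max (set R) \<le> M"
    using R(1) \<open>finite S\<close> unfolding M_def by (intro Max_mono) auto
  then have "M \<notin> set L"
    using R(4) by (metis List.finite_set Max_ge leD order.strict_trans2)
  then have "set L \<subseteq> S - {m, M}"
    using set_LR dist'(3) by blast
  moreover have "set R = S - set L - {m}"
    using set_LR dist'(4,5) by blast
  ultimately show ?thesis
    using uLR \<open>L \<noteq> []\<close> R split(2) dist'(1,2)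
    by (intro that[of L R]) (simp_all add: m_def M_def permutations_of_set_def)
qed

lemma andre_permutation_concat:
  fixes S :: "'a::linorder set"
  assumes S: "finite S" "2 \<le> card S" and A: "A \<subseteq> S - {Min S, Max S}"
    and L: "L \<in> permutations_of_set A" "L \<noteq> []" and R: "R \<in> permutations_of_set (S - A - {Min S})"
  shows "L @ Min S # R \<in> permutations_of_set S"
    and "andre_word (L @ Min S # R) \<longleftrightarrow> andre_word L \<and> andre_word R"
    and "Suc (descents (L @ Min S # R)) = Suc (descents L) + Suc (descents R)"
proof -
  have mM: "Min S \<in> S" "Max S \<in> S" "Min S < Max S"
    using S Min_less_Max[OF S] by (auto intro: Min_in Max_in)
  have set_L: "set L = A" "distinct L" and set_R: "set R = S - A - {Min S}" "distinct R"
    using L(1) R by (simp_all add: permutations_of_set_def)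
  have set_u: "set (L @ Min S # R) = S" and dist: "distinct (L @ Min S # R)"
    using set_L set_R A mM by auto
  then show "L @ Min S # R \<in> permutations_of_set S"
    by (simp add: permutations_of_set_def)
  have "Max S \<in> set R" "set R \<subseteq> S"
    using set_R A mM by auto
  then have "Max (set R) = Max S"
    using S(1) by (intro Max_eqI) auto
  moreover have "Max (set L) \<in> set L"
    using L(2) by simp
  then have "Max (set L) \<in> S - {Min S, Max S}"
    using set_L(1) A by blast
  ultimately have "Max (set L) < Max (set R)" "R \<noteq> []"
    using S(1) \<open>Max S \<in> set R\<close> by (auto simp: order.strict_iff_order)
  then show "andre_word (L @ Min S # R) \<longleftrightarrow> andre_word L \<and> andre_word R"
    and "Suc (descents (L @ Min S # R)) = Suc (descents L) + Suc (descents R)"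
    using andre_split_at_min[of "L @ Min S # R" L R, unfolded set_u, OF refl dist L(2)] by simp_all
qed

lemma hd_andre_eq_concat:
  fixes S :: "'a::linorder set"
  assumes "finite S" "2 \<le> card S" "a \<noteq> Min S"
  shows "{u \<in> permutations_of_set S. hd u = a \<and> andre_word u \<and> Suc (descents u) = k} =
    {L @ Min S # R |A L R. A \<in> {A. A \<subseteq> S - {Min S, Max S} \<and> a \<in> A} \<and>
       L \<in> {L \<in> permutations_of_set A. hd L = a \<and> andre_word L} \<and>
       R \<in> {R \<in> permutations_of_set (S - A - {Min S}). andre_word R} \<and>
       Suc (descents L) + Suc (descents R) = k}"
  (is "?U = ?V")
proof (intro equalityI subsetI)
  fix u assume u: "u \<in> ?U"
  then obtain L R where LR: "u = L @ Min S # R" "L \<noteq> []" "distinct L" "set L \<subseteq> S - {Min S, Max S}"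
    "R \<in> permutations_of_set (S - set L - {Min S})" "andre_word L" "andre_word R"
    "Suc (descents u) = Suc (descents L) + Suc (descents R)"
    using andre_permutation_split[of u S] assms(2,3) by blast
  then have "hd L = a" "set L \<in> {A. A \<subseteq> S - {Min S, Max S} \<and> a \<in> A}"
    using u by auto
  then show "u \<in> ?V"
    using LR u by (auto simp: permutations_of_set_def)
next
  fix u assume "u \<in> ?V"
  then obtain A L R where u: "u = L @ Min S # R" "A \<subseteq> S - {Min S, Max S}" "a \<in> A"
      "L \<in> permutations_of_set A" "hd L = a" "andre_word L"
      "R \<in> permutations_of_set (S - A - {Min S})" "andre_word R"
      "Suc (descents L) + Suc (descents R) = k"
    by blast
  then have "L \<noteq> []"
    by (auto simp: permutations_of_set_def)
  then show "u \<in> ?U"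
    using andre_permutation_concat[OF assms(1,2) u(2,4) _ u(7)] u by simp
qed

lemma card_hd_andre_decomp:
  fixes S :: "'a::linorder set"
  assumes "finite S" "2 \<le> card S" "a \<noteq> Min S"
  shows "card {u \<in> permutations_of_set S. hd u = a \<and> andre_word u \<and> Suc (descents u) = k} =
    (\<Sum>A | A \<subseteq> S - {Min S, Max S} \<and> a \<in> A. \<Sum>k1\<le>k.
       card {L \<in> permutations_of_set A. hd L = a \<and> andre_word L \<and> Suc (descents L) = k1} *
       andre_count (S - A - {Min S}) (k - k1))"
proof -
  let ?\<A> = "{A. A \<subseteq> S - {Min S, Max S} \<and> a \<in> A}"
  let ?X = "\<lambda>A. {L \<in> permutations_of_set A. hd L = a \<and> andre_word L}"
  let ?Y = "\<lambda>A. {R \<in> permutations_of_set (S - A - {Min S}). andre_word R}"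
  let ?w = "\<lambda>u. Suc (descents u)"
  have "finite ?\<A>"
    by (rule finite_subset[of _ "Pow S"]) (use assms(1) in auto)
  then have "card {u \<in> permutations_of_set S. hd u = a \<and> andre_word u \<and> Suc (descents u) = k} =
      (\<Sum>A\<in>?\<A>. \<Sum>k1\<le>k. card {L \<in> ?X A. ?w L = k1} * card {R \<in> ?Y A. ?w R = k - k1})"
    unfolding hd_andre_eq_concat[OF assms]
    by (rule card_concat_eq_sum[where Z = "{Min S}" and c = "\<lambda>_. Min S"]) (auto dest: permutations_of_setD)
  also have "\<dots> = (\<Sum>A\<in>?\<A>. \<Sum>k1\<le>k.
       card {L \<in> permutations_of_set A. hd L = a \<and> andre_word L \<and> Suc (descents L) = k1} *
       andre_count (S - A - {Min S}) (k - k1))"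
    unfolding andre_count_def by (simp add: conj_assoc)
  finally show ?thesis .
qed

lemma card_hd_min_andre:
  fixes S :: "'a::linorder set"
  assumes "finite S" "2 \<le> card S"
  shows "card {u \<in> permutations_of_set S. hd u = Min S \<and> andre_word u \<and> Suc (descents u) = k} =
    andre_count (S - {Min S}) k"
proof -
  have "S \<noteq> {}"
    using assms(2) by auto
  then have m: "Min S \<in> S"
    using assms(1) by simp
  have "andre_word (Min S # v) \<longleftrightarrow> andre_word v" "descents (Min S # v) = descents v"
    if v: "v \<in> permutations_of_set (S - {Min S})" for v
  proof -
    have "card (set v) = card S - 1"
      using v m assms(1) by (simp add: permutations_of_set_def)
    then have "v \<noteq> []"
      using assms(2) by auto
    have min: "\<forall>x \<in> set [] \<union> set v. Min S < x"
      using v assms(1) by (auto simp: permutations_of_set_def order.strict_iff_order)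
    moreover have "distinct ([] @ Min S # v)"
      using v by (simp add: permutations_of_set_def)
    ultimately show "andre_word (Min S # v) \<longleftrightarrow> andre_word v"
      using andre_word_split_at_min[of "[]" "Min S" v] \<open>v \<noteq> []\<close> by simp
    obtain b r where "v = b # r"
      using \<open>v \<noteq> []\<close> by (cases v) auto
    then show "descents (Min S # v) = descents v"
      using min by (auto dest: order.asym)
  qed
  then show ?thesis
    unfolding card_permutations_of_set_hd[OF m] andre_count_def
    by (intro arg_cong[where f = card] Collect_cong conj_cong refl) auto
qed

section \<open>Equinumerosity\<close>

lemma alt_count_complement_eq:
  fixes S :: "'a::linordered_ab_group_add set"
  assumes "finite S" "S \<noteq> {}" "A \<subseteq> S - {Min S, Max S}"
  shows "alt_count (odd (card A)) (S - A - {parity_extremum S A}) k = alt_count True (S - A - {Min S}) k"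
proof -
  have "Min S \<in> S - A" "Max S \<in> S - A"
    using assms by auto
  then have "card (S - A - {parity_extremum S A}) = card (S - A - {Min S})"
    using assms(1) unfolding parity_extremum_def by (simp add: card_Diff_singleton)
  then show ?thesis
    using assms(1) alt_count_down_eq_up[of "S - A - {Min S}"]
      alt_count_eq_if_card_eq[of "S - A - {parity_extremum S A}" "S - A - {Min S}"]
    by (cases "odd (card A)") simp_all
qed

lemma alt_count_eq_andre_count_if_hd:
  fixes B :: "'a::linorder set"
  assumes "finite B" "B \<noteq> {}"
    and "\<And>b. b \<in> B \<Longrightarrow>
      card {u \<in> permutations_of_set B. hd u = b \<and> alternating True u \<and> hr_leaves u = k} =
      card {u \<in> permutations_of_set B. hd u = b \<and> andre_word u \<and> Suc (descents u) = k}"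
  shows "alt_count True B k = andre_count B k"
proof -
  have "alt_count True B k =
      (\<Sum>b\<in>B. card {u \<in> permutations_of_set B. hd u = b \<and> alternating True u \<and> hr_leaves u = k})"
    unfolding alt_count_def by (rule card_permutations_of_set_sum_hd[OF assms(1,2)])
  also have "\<dots> = (\<Sum>b\<in>B. card {u \<in> permutations_of_set B. hd u = b \<and> andre_word u \<and> Suc (descents u) = k})"
    using assms(3) by (rule sum.cong[OF refl])
  also have "\<dots> = andre_count B k"
    unfolding andre_count_def by (rule card_permutations_of_set_sum_hd[OF assms(1,2), symmetric])
  finally show ?thesis .
qed

theorem card_hd_alternating_eq_andre:
  fixes S :: "'a::linordered_ab_group_add set"
  assumes "finite S" "a \<in> S"
  shows "card {u \<in> permutations_of_set S. hd u = a \<and> alternating True u \<and> hr_leaves u = k} =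
    card {u \<in> permutations_of_set S. hd u = a \<and> andre_word u \<and> Suc (descents u) = k}"
  using assms
proof (induction "card S" arbitrary: S a k rule: less_induct)
  case less
  have IH: "alt_count True B k' = andre_count B k'" if "finite B" "B \<noteq> {}" "card B < card S" for B :: "'a set" and k'
    using less.hyps[OF that(3,1)] by (rule alt_count_eq_andre_count_if_hd[OF that(1,2)])
  have "0 < card S"
    using less.prems by (auto simp: card_gt_0_iff)
  then consider "card S = 1" | "2 \<le> card S" "a = Min S" | "2 \<le> card S" "a \<noteq> Min S"
    by linarith
  then show ?case
  proof cases
    case 1
    then have "S = {a}"
      using less.prems by (metis card_1_singletonE singletonD)
    then show ?thesis
      by (intro arg_cong[where f = card] Collect_cong) (auto simp: hr_leaves_def)
  next
    case 2
    have "Min S \<in> S" "Max S \<in> S"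
      using less.prems by (auto intro: Min_in Max_in)
    then have "S - {Min S} \<noteq> {}" "card (S - {Min S}) < card S"
      using less.prems(1) \<open>0 < card S\<close> Min_less_Max[OF less.prems(1) 2(1)] by auto
    have "card {u \<in> permutations_of_set S. hd u = a \<and> alternating True u \<and> hr_leaves u = k} =
        alt_count False (S - {Min S}) k"
      unfolding 2(2) by (rule card_hd_min_alternating[OF less.prems(1) 2(1)])
    also have "\<dots> = alt_count True (S - {Min S}) k"
      using less.prems(1) by (simp add: alt_count_down_eq_up)
    also have "\<dots> = andre_count (S - {Min S}) k"
      using less.prems(1) \<open>S - {Min S} \<noteq> {}\<close> \<open>card (S - {Min S}) < card S\<close> by (intro IH) auto
    also have "\<dots> = card {u \<in> permutations_of_set S. hd u = a \<and> andre_word u \<and> Suc (descents u) = k}"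
      unfolding 2(2) by (rule card_hd_min_andre[OF less.prems(1) 2(1), symmetric])
    finally show ?thesis .
  next
    case 3
    show ?thesis
      unfolding card_hd_alternating_decomp[OF less.prems(1) 3] card_hd_andre_decomp[OF less.prems(1) 3]
    proof (rule sum.cong[OF refl], rule sum.cong[OF refl], rule arg_cong2[where f = "(*)"])
      fix A k1 assume "A \<in> {A. A \<subseteq> S - {Min S, Max S} \<and> a \<in> A}"
      then have A: "A \<subseteq> S - {Min S, Max S}" "a \<in> A"
        by simp_all
      have "Min S \<in> S" "Max S \<in> S" "Min S \<noteq> Max S"
        using less.prems Min_less_Max[OF less.prems(1) 3(1)] by (auto intro: Min_in Max_in)
      then have "A \<subset> S" "finite A"
        using A(1) less.prems(1) finite_subset by blast+
      then show "card {L \<in> permutations_of_set A. hd L = a \<and> alternating True L \<and> hr_leaves L = k1} =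
          card {L \<in> permutations_of_set A. hd L = a \<and> andre_word L \<and> Suc (descents L) = k1}"
        using less.prems(1) A(2) by (intro less.hyps psubset_card_mono)
      have "Max S \<in> S - A - {Min S}" "S - A - {Min S} \<subset> S"
        using A(1) \<open>Min S \<in> S\<close> \<open>Max S \<in> S\<close> \<open>Min S \<noteq> Max S\<close> by auto
      then have "alt_count True (S - A - {Min S}) (k - k1) = andre_count (S - A - {Min S}) (k - k1)"
        using less.prems(1) by (intro IH psubset_card_mono) auto
      then show "alt_count (odd (card A)) (S - A - {parity_extremum S A}) (k - k1) =
          andre_count (S - A - {Min S}) (k - k1)"
        using alt_count_complement_eq[OF less.prems(1) _ A(1)] \<open>Min S \<in> S\<close> by (metis empty_iff)
    qed
  qed
qed

section \<open>Signed permutations\<close>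

lemma every_triple_iff_nth:
  "every_triple C p \<longleftrightarrow>
     (\<forall>i\<in>{1..length p - 2}. C (take (i - 1) p) (p ! (i - 1)) (p ! i) (p ! Suc i) (drop (Suc (Suc i)) p))"
  unfolding every_triple_def
proof (intro iffI allI impI ballI)
  fix i assume H: "\<forall>xs x y z ys. p = xs @ x # y # z # ys \<longrightarrow> C xs x y z ys"
    and i: "i \<in> {1..length p - 2}"
  then obtain j where j: "i = Suc j" "Suc (Suc j) < length p"
    by (cases i) auto
  then have "p = take j p @ p ! j # p ! Suc j # p ! Suc (Suc j) # drop (Suc (Suc (Suc j))) p"
    by (simp add: Cons_nth_drop_Suc)
  then show "C (take (i - 1) p) (p ! (i - 1)) (p ! i) (p ! Suc i) (drop (Suc (Suc i)) p)"
    using H j(1) by (metis diff_Suc_1)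
next
  fix xs x y z ys
  assume H: "\<forall>i\<in>{1..length p - 2}. C (take (i - 1) p) (p ! (i - 1)) (p ! i) (p ! Suc i) (drop (Suc (Suc i)) p)"
    and p: "p = xs @ x # y # z # ys"
  have "Suc (length xs) \<in> {1..length p - 2}"
    using p by simp
  then show "C xs x y z ys"
    using H p by (fastforce simp: nth_append)
qed

lemma fact_w2_fact_w4:
  assumes "1 \<le> i" "Suc i < length p"
  shows "set (fact_w2 p i) = set (takeWhile (\<lambda>v. p ! i < v) (p ! (i - 1) # rev (take (i - 1) p)))"
    and "fact_w4 p i = takeWhile (\<lambda>v. p ! i < v) (p ! Suc i # drop (Suc (Suc i)) p)"
proof -
  have "take i p = take (i - 1) p @ [p ! (i - 1)]"
    using assms by (cases i) (auto simp: take_Suc_conv_app_nth)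
  then show "set (fact_w2 p i) = set (takeWhile (\<lambda>v. p ! i < v) (p ! (i - 1) # rev (take (i - 1) p)))"
    unfolding fact_w2_def by simp
  show "fact_w4 p i = takeWhile (\<lambda>v. p ! i < v) (p ! Suc i # drop (Suc (Suc i)) p)"
    using assms(2) unfolding fact_w4_def by (simp add: Cons_nth_drop_Suc)
qed

lemma andre_word_iff_nth:
  assumes "length p = Suc n" "1 \<le> n"
  shows "andre_word p \<longleftrightarrow>
    (\<forall>i \<in> {1..n-1}. \<not> (p ! (i-1) > p ! i \<and> p ! i > p ! Suc i)) \<and>
    p ! (n-1) < p ! n \<and>
    (\<forall>i \<in> {1..n-1}. p ! (i-1) > p ! i \<and> p ! i < p ! Suc i \<longrightarrow>
        Max (set (fact_w2 p i)) < Max (set (fact_w4 p i)))"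
proof -
  have triple: "andre_triple (take (i - 1) p) (p ! (i - 1)) (p ! i) (p ! Suc i) (drop (Suc (Suc i)) p) \<longleftrightarrow>
      \<not> (p ! (i-1) > p ! i \<and> p ! i > p ! Suc i) \<and>
      (p ! (i-1) > p ! i \<and> p ! i < p ! Suc i \<longrightarrow> Max (set (fact_w2 p i)) < Max (set (fact_w4 p i)))"
    if "i \<in> {1..n-1}" for i
  proof -
    have "1 \<le> i" "Suc i < length p"
      using that assms by auto
    then show ?thesis
      unfolding andre_triple_def fact_w2_fact_w4[OF \<open>1 \<le> i\<close> \<open>Suc i < length p\<close>] by simp
  qed
  have "p \<noteq> []" "butlast p \<noteq> []"
    using assms by (auto simp flip: length_greater_0_conv)
  then have "last (butlast p) = p ! (n - 1)" "last p = p ! n"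
    using assms by (simp_all add: last_conv_nth nth_butlast)
  then show ?thesis
    using assms triple unfolding andre_word_def every_triple_iff_nth by auto
qed

lemma signed_perms_distinct:
  assumes "w \<in> signed_perms n"
  shows "distinct (0 # w)" and "length w = n"
proof -
  have w: "length w = n" "distinct (map abs w)" "set (map abs w) = {1..int n}"
    using assms unfolding signed_perms_def by auto
  then have "0 \<notin> set w"
    by force
  then show "distinct (0 # w)"
    using w(2) by (simp add: distinct_map)
  show "length w = n"
    by (fact w(1))
qed

lemma finite_signed_perms: "finite (signed_perms n)"
proof (rule finite_subset)
  show "signed_perms n \<subseteq> {xs. set xs \<subseteq> {-int n..int n} \<and> length xs = n}"
    unfolding signed_perms_def by (force simp: abs_le_iff)
qed (rule finite_lists_length_eq, simp)

lemma signed_perms_if_set_eq: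
  assumes "w \<in> signed_perms n" "distinct v" "set v = set w"
  shows "v \<in> signed_perms n"
proof -
  have w: "length w = n" "distinct (map abs w)" "set (map abs w) = {1..int n}"
    using assms(1) unfolding signed_perms_def by auto
  then have "inj_on abs (set v)"
    using assms(3) by (simp add: distinct_map)
  moreover have "length v = n"
    using assms(2,3) w(1) signed_perms_distinct(1)[OF assms(1)] by (metis distinct.simps(2) distinct_card)
  ultimately show ?thesis
    using assms(2,3) w(3) unfolding signed_perms_def by (simp add: distinct_map)
qed

lemma card_signed_perms_eq_sum:
  "card {w \<in> signed_perms n. P (0 # w)} =
    (\<Sum>S\<in>(\<lambda>w. set (0 # w)) ` signed_perms n. card {u \<in> permutations_of_set S. hd u = 0 \<and> P u})"
proof -
  have "card {w \<in> signed_perms n. P (0 # w)} =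
      (\<Sum>S\<in>(\<lambda>w. set (0 # w)) ` signed_perms n. card {w \<in> signed_perms n. P (0 # w) \<and> set (0 # w) = S})"
    by (subst card_UN_disjoint[symmetric]) (auto intro!: arg_cong[where f = card] finite_signed_perms)
  also have "\<dots> = (\<Sum>S\<in>(\<lambda>w. set (0 # w)) ` signed_perms n. card {u \<in> permutations_of_set S. hd u = 0 \<and> P u})"
  proof (rule sum.cong[OF refl])
    fix S assume "S \<in> (\<lambda>w. set (0 # w)) ` signed_perms n"
    then obtain w0 where w0: "w0 \<in> signed_perms n" "S = set (0 # w0)"
      by blast
    have "0 \<notin> set w0"
      using signed_perms_distinct(1)[OF w0(1)] by simp
    have "{w \<in> signed_perms n. P (0 # w) \<and> set (0 # w) = S} = {v \<in> permutations_of_set (S - {0}). P (0 # v)}"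
    proof (intro equalityI subsetI)
      fix w assume w: "w \<in> {w \<in> signed_perms n. P (0 # w) \<and> set (0 # w) = S}"
      then have "distinct (0 # w)"
        using signed_perms_distinct(1) by blast
      then show "w \<in> {v \<in> permutations_of_set (S - {0}). P (0 # v)}"
        using w by (auto simp: permutations_of_set_def)
    next
      fix v assume "v \<in> {v \<in> permutations_of_set (S - {0}). P (0 # v)}"
      then have v: "distinct v" "set v = set w0" "P (0 # v)"
        using w0(2) \<open>0 \<notin> set w0\<close> by (auto simp: permutations_of_set_def)
      then show "v \<in> {w \<in> signed_perms n. P (0 # w) \<and> set (0 # w) = S}"
        using signed_perms_if_set_eq[OF w0(1) v(1,2)] w0(2) by simp
    qed
    then show "card {w \<in> signed_perms n. P (0 # w) \<and> set (0 # w) = S} =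
        card {u \<in> permutations_of_set S. hd u = 0 \<and> P u}"
      using w0(2) by (simp add: card_permutations_of_set_hd)
  qed
  finally show ?thesis .
qed

lemma snakes_iff: "w \<in> snakes n \<longleftrightarrow> w \<in> signed_perms n \<and> alternating True (0 # w)"
  unfolding snakes_def alternating_iff_nth using signed_perms_distinct(2)[of w n] by auto

lemma andreB_iff:
  assumes "1 \<le> n"
  shows "w \<in> andreB n \<longleftrightarrow> w \<in> signed_perms n \<and> andre_word (0 # w)"
  using andre_word_iff_nth[of "0 # w" n] assms signed_perms_distinct(2)[of w n]
  unfolding andreB_def Let_def by auto

lemma desB_eq_descents: "desB w = descents (0 # w)"
  unfolding desB_def descents_eq_card by simp

theorem mainTheorem12:
  fixes n k :: nat
  assumes "n \<ge> 1" and "k \<ge> 1"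
  shows "card {w \<in> snakes n. leaf_count (T_pi w) = k} = card {w \<in> andreB n. desB w = k - 1}"
proof -
  let ?\<S> = "(\<lambda>w. set (0 # w)) ` signed_perms n"
  have "{w \<in> snakes n. leaf_count (T_pi w) = k} =
      {w \<in> signed_perms n. alternating True (0 # w) \<and> hr_leaves (0 # w) = k}"
    using signed_perms_distinct(1) by (auto simp: snakes_iff hr_leaves_def T_pi_eq_hr_tree_of)
  then have "card {w \<in> snakes n. leaf_count (T_pi w) = k} =
      (\<Sum>S\<in>?\<S>. card {u \<in> permutations_of_set S. hd u = 0 \<and> alternating True u \<and> hr_leaves u = k})"
    by (simp add: card_signed_perms_eq_sum[where P = "\<lambda>u. alternating True u \<and> hr_leaves u = k"])
  also have "\<dots> = (\<Sum>S\<in>?\<S>. card {u \<in> permutations_of_set S. hd u = 0 \<and> andre_word u \<and> Suc (descents u) = k})"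
    by (intro sum.cong refl card_hd_alternating_eq_andre) auto
  also have "\<dots> = card {w \<in> signed_perms n. andre_word (0 # w) \<and> Suc (descents (0 # w)) = k}"
    by (rule card_signed_perms_eq_sum[where P = "\<lambda>u. andre_word u \<and> Suc (descents u) = k", symmetric])
  also have "{w \<in> signed_perms n. andre_word (0 # w) \<and> Suc (descents (0 # w)) = k} =
      {w \<in> andreB n. desB w = k - 1}"
    using assms by (auto simp: andreB_iff desB_eq_descents)
  finally show ?thesis .
qed

end
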